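(* Let $d\ge 2$ and $L\in\mathbb{N}$, and let $$P(\mathbf{x})=\prod_{j=1}^d\left[\sin^{2L}(\pi x_j/2)\sum_{k_j=0}^{L-1}\binom{2L-1}{k_j}\sin^{2(L-1-k_j)}(\pi x_j/2)\cos^{2k_j}(\pi x_j/2)\right],\qquad\mathbf{x}\in\mathbb{R}^d.$$ Then $P\chi_{[0,2]^d}$ satisfies the partition of unity condition $$\sum_{\mathbf{n}\in\mathbb{Z}^d}P(\mathbf{x}+\mathbf{n})\chi_{[0,2]^d}(\mathbf{x}+\mathbf{n})=1\quad\text{for all }\mathbf{x}\in\mathbb{R}^d,$$ and $P\chi_{[0,2]^d}\in C^{2L-1}(\mathbb{R}^d)$.
   Context: $\chi_{[0,2]^d}$ is the indicator function of $[0,2]^d$. $C^{m}(\mathbb{R}^d)$ denotes functions with continuous partial derivatives of all total orders at most $m$. *)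

theory Defs
  imports "HOL-Analysis.Analysis"
begin

definition Pfun :: "nat \<Rightarrow> real ^ 'n \<Rightarrow> real" where
  "Pfun L x = (\<Prod>j\<in>UNIV.
     (sin (pi * x $ j / 2)) ^ (2 * L) *
     (\<Sum>k<L. real ((2 * L - 1) choose k) *
        (sin (pi * x $ j / 2)) ^ (2 * (L - 1 - k)) * (cos (pi * x $ j / 2)) ^ (2 * k)))"

definition cube02 :: "(real ^ 'n) set" where
  "cube02 = {x. \<forall>i. 0 \<le> x $ i \<and> x $ i \<le> 2}"

definition int_lattice :: "(real ^ 'n) set" where
  "int_lattice = {n. \<forall>i. n $ i \<in> \<int>}"

definition partial_deriv :: "'n \<Rightarrow> (real ^ 'n \<Rightarrow> real) \<Rightarrow> real ^ 'n \<Rightarrow> real" where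
  "partial_deriv i f x = deriv (\<lambda>t. f (x + t *\<^sub>R axis i 1)) 0"

fun Cm :: "nat \<Rightarrow> (real ^ 'n \<Rightarrow> real) \<Rightarrow> bool" where
  "Cm 0 f \<longleftrightarrow> continuous_on UNIV f"
| "Cm (Suc m) f \<longleftrightarrow> continuous_on UNIV f \<and>
     (\<forall>i x. (\<lambda>t. f (x + t *\<^sub>R axis i 1)) differentiable (at 0)) \<and>
     (\<forall>i. Cm m (partial_deriv i f))"

end

theory Submission
  imports Defs
begin

text \<open>
With \<open>s = sin(\<pi>t/2)^2\<close> and \<open>c = cos(\<pi>t/2)^2\<close>, the univariate factor \<open>p\<close> of \<open>P\<close> is
\<open>\<Sum>k<L. C(2L-1,k) s^(2L-1-k) c^k\<close>, the upper half of the binomial expansion of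
\<open>(s + c)^(2L-1) = 1\<close>. Shifting \<open>t\<close> by one swaps \<open>s\<close> and \<open>c\<close> and so turns \<open>p\<close> into the lower
half: \<open>p(t) + p(t+1) = 1\<close>. Every real has two or three integer translates in \<open>[0,2]\<close>, and \<open>p\<close>
vanishes at \<open>0\<close> and \<open>2\<close>, so the integer translates of \<open>p \<chi>[0,2]\<close> sum to one; the tensor
product inherits this. For smoothness, the factor \<open>sin(\<pi>t/2)^(2L)\<close> of \<open>p\<close> makes all
derivatives of order below \<open>2L\<close> vanish at \<open>0\<close> and \<open>2\<close>, so cutting \<open>p\<close> off outside \<open>[0,2]\<close>
keeps it \<open>C^(2L-1)\<close>, and products of functions of separate coordinates are as smooth as
their factors.
\<close>

fun Cn_real :: "nat \<Rightarrow> (real \<Rightarrow> real) \<Rightarrow> bool" where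
  "Cn_real 0 f \<longleftrightarrow> continuous_on UNIV f"
| "Cn_real (Suc n) f \<longleftrightarrow> (\<exists>f'. (\<forall>x. (f has_real_derivative f' x) (at x)) \<and> Cn_real n f')"

lemma Cn_real_continuous: "Cn_real n f \<Longrightarrow> continuous_on UNIV f"
  by (cases n) (auto intro: DERIV_isCont continuous_at_imp_continuous_on)

lemma Cn_real_Suc_imp: "Cn_real (Suc n) f \<Longrightarrow> Cn_real n f"
proof (induction n arbitrary: f)
  case 0
  then show ?case using Cn_real_continuous by (metis Cn_real.simps(1))
next
  case (Suc n)
  then show ?case by auto
qed

lemma Cn_real_const: "Cn_real n (\<lambda>_. c)"
  by (induction n arbitrary: c) (auto intro!: exI[of _ "\<lambda>_. 0"])

lemma Cn_real_add: "Cn_real n f \<Longrightarrow> Cn_real n g \<Longrightarrow> Cn_real n (\<lambda>t. f t + g t)"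
proof (induction n arbitrary: f g)
  case 0
  then show ?case by (auto intro: continuous_intros)
next
  case (Suc n)
  then obtain f' g' where "\<forall>x. (f has_real_derivative f' x) (at x)" "Cn_real n f'"
     "\<forall>x. (g has_real_derivative g' x) (at x)" "Cn_real n g'" by auto
  then show ?case
    using Suc.IH[of f' g'] by (auto intro!: exI[of _ "\<lambda>t. f' t + g' t"] derivative_intros)
qed

lemma Cn_real_mult: "Cn_real n f \<Longrightarrow> Cn_real n g \<Longrightarrow> Cn_real n (\<lambda>t. f t * g t)"
proof (induction n arbitrary: f g)
  case 0
  then show ?case by (auto intro: continuous_intros)
next
  case (Suc n)
  then obtain f' g' where d: "\<forall>x. (f has_real_derivative f' x) (at x)" "Cn_real n f'"
     "\<forall>x. (g has_real_derivative g' x) (at x)" "Cn_real n g'" by auto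
  have "Cn_real n f" "Cn_real n g" using Suc.prems Cn_real_Suc_imp by blast+
  then have "Cn_real n (\<lambda>t. f' t * g t + f t * g' t)"
    using Suc.IH d Cn_real_add by blast
  moreover have "\<forall>x. ((\<lambda>t. f t * g t) has_real_derivative (f' x * g x + f x * g' x)) (at x)"
    using d by (auto intro!: derivative_eq_intros)
  ultimately show ?case by auto
qed

lemma Cn_real_power: "Cn_real n f \<Longrightarrow> Cn_real n (\<lambda>t. f t ^ k)"
  by (induction k) (auto intro: Cn_real_const Cn_real_mult)

lemma Cn_real_sum:
  "finite S \<Longrightarrow> (\<And>i. i \<in> S \<Longrightarrow> Cn_real n (f i)) \<Longrightarrow> Cn_real n (\<lambda>t. \<Sum>i\<in>S. f i t)"
  by (induction S rule: finite_induct) (auto intro: Cn_real_const Cn_real_add)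

lemma Cn_real_sin_cos_affine: "Cn_real n (\<lambda>t. sin (a * t + b)) \<and> Cn_real n (\<lambda>t. cos (a * t + b))"
proof (induction n)
  case 0
  then show ?case by (auto intro!: continuous_intros)
next
  case (Suc n)
  have "\<forall>x. ((\<lambda>t. sin (a * t + b)) has_real_derivative (a * cos (a * x + b))) (at x)"
       "\<forall>x. ((\<lambda>t. cos (a * t + b)) has_real_derivative (- a * sin (a * x + b))) (at x)"
    by (auto intro!: derivative_eq_intros)
  moreover have "Cn_real n (\<lambda>t. a * cos (a * t + b))" "Cn_real n (\<lambda>t. - a * sin (a * t + b))"
    using Suc Cn_real_mult[OF Cn_real_const] by blast+
  ultimately show ?case by auto
qed

text \<open>\<open>Cn_flat a b n f\<close>: \<open>f\<close> is \<open>C^n\<close> and \<open>f, f', \<dots>, f^(n)\<close> vanish at \<open>a\<close> and \<open>b\<close>, which is what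
  makes the cut-off \<open>f \<chi>[a,b]\<close> again \<open>C^n\<close>.\<close>

fun Cn_flat :: "real \<Rightarrow> real \<Rightarrow> nat \<Rightarrow> (real \<Rightarrow> real) \<Rightarrow> bool" where
  "Cn_flat a b 0 f \<longleftrightarrow> continuous_on UNIV f \<and> f a = 0 \<and> f b = 0"
| "Cn_flat a b (Suc n) f \<longleftrightarrow> f a = 0 \<and> f b = 0 \<and>
     (\<exists>f'. (\<forall>x. (f has_real_derivative f' x) (at x)) \<and> Cn_flat a b n f')"

lemma Cn_flat_power_mult:
  assumes "n < k" "Cn_real n u" "u a = 0" "u b = 0" "Cn_real n q"
  shows "Cn_flat a b n (\<lambda>t. u t ^ k * q t)"
  using assms
proof (induction n arbitrary: k q)
  case 0
  then show ?case by (auto intro!: continuous_intros dest: Cn_real_continuous)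
next
  case (Suc n)
  then obtain j where k: "k = Suc j" by (cases k) auto
  from Suc.prems obtain u' q' where d: "\<forall>x. (u has_real_derivative u' x) (at x)" "Cn_real n u'"
     "\<forall>x. (q has_real_derivative q' x) (at x)" "Cn_real n q'" by auto
  have un: "Cn_real n u" "Cn_real n q" using Suc.prems Cn_real_Suc_imp by blast+
  \<comment> \<open>\<open>(u^k q)' = u^(k-1) r\<close>: each derivative lowers the power of \<open>u\<close> by only one.\<close>
  define r where "r = (\<lambda>t. real k * u' t * q t + u t * q' t)"
  have "Cn_real n r" unfolding r_def
    by (intro Cn_real_add Cn_real_mult Cn_real_const un d)
  then have "Cn_flat a b n (\<lambda>t. u t ^ j * r t)"
    using Suc.IH[of j r] Suc.prems k un by auto
  moreover have "((\<lambda>t. u t ^ k * q t) has_real_derivative (u x ^ j * r x)) (at x)" for x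
  proof -
    have "((\<lambda>t. u t ^ k * q t) has_real_derivative
            (real k * u x ^ (k - 1) * u' x * q x + u x ^ k * q' x)) (at x)"
      using d by (auto intro!: derivative_eq_intros)
    moreover have "real k * u x ^ (k - 1) * u' x * q x + u x ^ k * q' x = u x ^ j * r x"
      unfolding r_def k by (simp add: algebra_simps)
    ultimately show ?thesis by simp
  qed
  ultimately show ?case
    using Suc.prems k by (auto simp del: power_Suc intro!: exI[of _ "\<lambda>t. u t ^ j * r t"])
qed

lemma continuous_on_mult_indicator_interval:
  fixes p :: "real \<Rightarrow> real"
  assumes "continuous_on UNIV p" "p a = 0" "p b = 0"
  shows "continuous_on UNIV (\<lambda>t. p t * indicator {a..b} t)"
proof -
  have U: "UNIV = {..a} \<union> ({a..b} \<union> {b..})" by auto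
  have "continuous_on {..a} (\<lambda>t. p t * indicator {a..b} t)"
    by (rule continuous_on_eq[OF continuous_on_const[of "{..a}" 0]])
      (auto simp: assms indicator_def)
  moreover have "continuous_on {a..b} (\<lambda>t. p t * indicator {a..b} t)"
    by (rule continuous_on_eq[OF continuous_on_subset[OF assms(1)]]) (auto simp: indicator_def)
  moreover have "continuous_on {b..} (\<lambda>t. p t * indicator {a..b} t)"
    by (rule continuous_on_eq[OF continuous_on_const[of "{b..}" 0]])
      (auto simp: assms indicator_def)
  ultimately show ?thesis
    by (subst U, intro continuous_on_closed_Un) auto
qed

lemma DERIV_from_left_right:
  assumes "(f has_real_derivative D) (at x within {..x})"
    and "(f has_real_derivative D) (at x within {x..})"
  shows "(f has_real_derivative D) (at x)"
proof -
  have "((\<lambda>y. (f y - f x) / (y - x)) \<longlongrightarrow> D) (at x within ({..x} \<union> {x..}))"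
    using assms unfolding has_field_derivative_iff Lim_within_Un by simp
  moreover have "{..x} \<union> {x..} = UNIV" by auto
  ultimately show ?thesis unfolding has_field_derivative_iff by simp
qed

lemma DERIV_mult_indicator_interval:
  assumes "a < b" and d: "\<forall>x. (p has_real_derivative p' x) (at x)"
    and z: "p a = 0" "p b = 0" "p' a = 0" "p' b = 0"
  shows "((\<lambda>t. p t * indicator {a..b} t) has_real_derivative (p' x * indicator {a..b} x)) (at x)"
proof -
  let ?g = "\<lambda>t. p t * indicator {a..b} t"
  have zero: "((\<lambda>_. 0) has_real_derivative 0) (at y within S)" for y S by simp
  have inside: "(?g has_real_derivative 0) (at x within S)"
    if "x \<in> {a, b}" "x \<in> S" "\<And>y. y \<in> S \<Longrightarrow> dist y x < b - a \<Longrightarrow> y \<in> {a..b}" for S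
  proof -
    have "(?g has_real_derivative p' x) (at x within S)"
      by (rule has_field_derivative_transform_within[OF has_field_derivative_at_within[OF d[rule_format]],
            of "b - a"]) (use that \<open>a < b\<close> in \<open>auto simp: indicator_def\<close>)
    then show ?thesis using that z by auto
  qed
  have outside: "(?g has_real_derivative 0) (at x within S)"
    if "x \<in> {a, b}" "x \<in> S" "S \<inter> {a..b} \<subseteq> {x}" for S
    by (rule has_field_derivative_transform_within[OF zero, of 1])
      (use that z in \<open>auto simp: indicator_def\<close>)
  consider "x < a \<or> b < x" | "a < x \<and> x < b" | "x = a" | "x = b" by linarith
  then show ?thesis
  proof cases
    case 1
    have "(?g has_real_derivative 0) (at x)"
      by (rule has_field_derivative_transform_within_open[OF zero, of "- {a..b}"])
        (use 1 in \<open>auto simp: indicator_def\<close>)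
    moreover have "indicator {a..b} x = (0::real)" using 1 by auto
    ultimately show ?thesis by simp
  next
    case 2
    have "(?g has_real_derivative p' x) (at x)"
      by (rule has_field_derivative_transform_within_open[OF d[rule_format], of "{a<..<b}"])
        (use 2 in \<open>auto simp: indicator_def\<close>)
    then show ?thesis using 2 by (simp add: indicator_def)
  next
    case 3
    then show ?thesis
      using DERIV_from_left_right[OF outside inside] \<open>a < b\<close> z
      by (auto simp: indicator_def dist_real_def)
  next
    case 4
    then show ?thesis
      using DERIV_from_left_right[OF inside outside] \<open>a < b\<close> z
      by (auto simp: indicator_def dist_real_def)
  qed
qed

lemma Cn_real_mult_indicator_interval:
  "a < b \<Longrightarrow> Cn_flat a b n p \<Longrightarrow> Cn_real n (\<lambda>t. p t * indicator {a..b} t)"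
proof (induction n arbitrary: p)
  case 0
  then show ?case using continuous_on_mult_indicator_interval by auto
next
  case (Suc n)
  then obtain p' where d: "\<forall>x. (p has_real_derivative p' x) (at x)" "Cn_flat a b n p'"
    and z: "p a = 0" "p b = 0"
    by auto
  have "p' a = 0" "p' b = 0" using d(2) by (cases n; auto)+
  then have "\<forall>x. ((\<lambda>t. p t * indicator {a..b} t) has_real_derivative (p' x * indicator {a..b} x)) (at x)"
    using DERIV_mult_indicator_interval \<open>a < b\<close> d z by blast
  then show ?case using Suc.IH[OF \<open>a < b\<close> d(2)] by auto
qed


lemma continuous_on_coordinate_product:
  fixes G :: "'n::finite \<Rightarrow> real \<Rightarrow> real"
  assumes "\<And>j. continuous_on UNIV (G j)"
  shows "continuous_on UNIV (\<lambda>x::real^'n. \<Prod>j\<in>UNIV. G j (x $ j))"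
proof -
  have "continuous_on UNIV (\<lambda>x::real^'n. G j (x $ j))" for j
    by (rule continuous_on_compose2[OF assms]) (auto intro: continuous_intros)
  then show ?thesis by (auto intro!: continuous_intros)
qed

lemma Cm_coordinate_product:
  fixes G :: "'n::finite \<Rightarrow> real \<Rightarrow> real"
  shows "(\<And>j. Cn_real m (G j)) \<Longrightarrow> Cm m (\<lambda>x::real^'n. \<Prod>j\<in>UNIV. G j (x $ j))"
proof (induction m arbitrary: G)
  case 0
  then show ?case by (simp add: continuous_on_coordinate_product)
next
  case (Suc m)
  define F where "F = (\<lambda>x::real^'n. \<Prod>j\<in>UNIV. G j (x $ j))"
  have cont: "continuous_on UNIV F"
    unfolding F_def using continuous_on_coordinate_product Suc.prems Cn_real_continuous by blast
  obtain G' where G': "\<And>j x. (G j has_real_derivative G' j x) (at x)" "\<And>j. Cn_real m (G' j)"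
    using Suc.prems by (simp only: Cn_real.simps) metis
  have Gm: "Cn_real m (G j)" for j using Suc.prems Cn_real_Suc_imp by blast
  have line: "F (x + t *\<^sub>R axis i 1) = G i (x $ i + t) * (\<Prod>j\<in>UNIV-{i}. G j (x $ j))" for x i t
  proof -
    have "F (x + t *\<^sub>R axis i 1)
        = G i ((x + t *\<^sub>R axis i 1) $ i) * (\<Prod>j\<in>UNIV-{i}. G j ((x + t *\<^sub>R axis i 1) $ j))"
      unfolding F_def by (rule prod.remove) auto
    also have "(\<Prod>j\<in>UNIV-{i}. G j ((x + t *\<^sub>R axis i 1) $ j)) = (\<Prod>j\<in>UNIV-{i}. G j (x $ j))"
      by (rule prod.cong) (auto simp: axis_def)
    finally show ?thesis by (simp add: axis_def)
  qed
  have der: "((\<lambda>t. F (x + t *\<^sub>R axis i 1)) has_real_derivative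
               G' i (x $ i) * (\<Prod>j\<in>UNIV-{i}. G j (x $ j))) (at 0)" for x i
  proof -
    have "((\<lambda>t. G i (x $ i + t)) has_real_derivative G' i (x $ i)) (at 0)"
      using DERIV_shift[of "G i" "G' i (x $ i)" 0 "x $ i"] G'(1) by (simp add: add.commute)
    then show ?thesis unfolding line by (rule DERIV_cmult_right)
  qed
  have "partial_deriv i F = (\<lambda>x. \<Prod>j\<in>UNIV. (G(i := G' i)) j (x $ j))" for i
  proof
    fix x
    have "partial_deriv i F x = G' i (x $ i) * (\<Prod>j\<in>UNIV-{i}. G j (x $ j))"
      unfolding partial_deriv_def using der by (rule DERIV_imp_deriv)
    also have "\<dots> = (\<Prod>j\<in>UNIV. (G(i := G' i)) j (x $ j))"
      by (subst prod.remove[of UNIV i]) (auto intro!: prod.cong)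
    finally show "partial_deriv i F x = (\<Prod>j\<in>UNIV. (G(i := G' i)) j (x $ j))" .
  qed
  then have "Cm m (partial_deriv i F)" for i
    using Suc.IH[of "G(i := G' i)"] G'(2) Gm by simp
  moreover have "(\<lambda>t. F (x + t *\<^sub>R axis i 1)) differentiable (at 0)" for x i
    using der[of x i] unfolding differentiable_def has_field_derivative_def by blast
  ultimately show ?case using cont unfolding F_def by simp
qed

lemma has_sum_coordinate_product_lattice:
  fixes h :: "'n::finite \<Rightarrow> real \<Rightarrow> real"
  assumes fin: "\<And>j. finite (A j)" and "\<And>j. A j \<subseteq> \<int>"
    and sums: "\<And>j. (\<Sum>k\<in>A j. h j k) = s j"
    and vanish: "\<And>j k. k \<in> \<int> \<Longrightarrow> k \<notin> A j \<Longrightarrow> h j k = 0"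
  shows "((\<lambda>n::real^'n. \<Prod>j\<in>UNIV. h j (n $ j)) has_sum (\<Prod>j\<in>UNIV. s j)) int_lattice"
proof -
  define f where "f = (\<lambda>n::real^'n. \<Prod>j\<in>UNIV. h j (n $ j))"
  define S where "S = (vec_lambda ` PiE UNIV A :: (real^'n) set)"
  have S_iff: "n \<in> S \<longleftrightarrow> (\<forall>j. n $ j \<in> A j)" for n
  proof
    assume "\<forall>j. n $ j \<in> A j"
    then have "vec_nth n \<in> PiE UNIV A" by (auto simp: PiE_iff)
    then show "n \<in> S" unfolding S_def by (metis image_eqI vec_nth_inverse)
  qed (auto simp: S_def PiE_iff)
  have "sum f S = (\<Sum>g\<in>PiE UNIV A. \<Prod>j\<in>UNIV. h j (g j))"
    unfolding S_def f_def by (subst sum.reindex) (auto simp: inj_on_def vec_lambda_inject)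
  also have "\<dots> = (\<Prod>j\<in>UNIV. s j)"
    by (subst prod_sum_PiE[symmetric]) (auto simp: fin sums)
  finally have "(f has_sum (\<Prod>j\<in>UNIV. s j)) S"
    using fin by (intro has_sum_finiteI) (auto simp: S_def intro!: finite_imageI finite_PiE)
  moreover have "f n = 0" if "n \<in> int_lattice - S" for n
  proof -
    from that obtain j where "n $ j \<notin> A j" "n $ j \<in> \<int>" by (auto simp: S_iff int_lattice_def)
    then show ?thesis unfolding f_def using vanish by (subst prod_zero_iff) auto
  qed
  moreover have "S \<subseteq> int_lattice" using assms(2) by (auto simp: S_iff int_lattice_def subset_iff)
  ultimately show ?thesis
    unfolding f_def[symmetric] using has_sum_cong_neutral[of int_lattice S f f] by blast
qed

lemma binomial_sum_halves:
  fixes a b :: real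
  assumes "a + b = 1" and "L \<ge> 1"
  shows "a ^ L * (\<Sum>k<L. real ((2*L-1) choose k) * a ^ (L-1-k) * b ^ k)
       + b ^ L * (\<Sum>k<L. real ((2*L-1) choose k) * b ^ (L-1-k) * a ^ k) = 1"
proof -
  define n where "n = 2 * L - 1"
  define f where "f k = real (n choose k) * a ^ k * b ^ (n - k)" for k
  have pow: "c ^ (n - k) = c ^ L * c ^ (L - 1 - k)" if "k < L" for k and c :: real
  proof -
    have "n - k = L + (L - 1 - k)" using that unfolding n_def by auto
    then show ?thesis by (simp only: power_add)
  qed
  have upper: "a ^ L * (\<Sum>k<L. real (n choose k) * a ^ (L-1-k) * b ^ k) = (\<Sum>k\<in>{L..n}. f k)"
  proof -
    have "a ^ L * (\<Sum>k<L. real (n choose k) * a ^ (L-1-k) * b ^ k) = (\<Sum>k<L. f (n - k))"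
    proof (unfold sum_distrib_left, intro sum.cong refl)
      fix k assume "k \<in> {..<L}"
      then have "k \<le> n" "n - (n - k) = k" unfolding n_def by auto
      then have "f (n - k) = real (n choose k) * a ^ (n - k) * b ^ k"
        unfolding f_def using binomial_symmetric[of k n] by simp
      with \<open>k \<in> {..<L}\<close> show "a ^ L * (real (n choose k) * a ^ (L-1-k) * b ^ k) = f (n - k)"
        by (simp add: pow mult_ac)
    qed
    also have "\<dots> = (\<Sum>k\<in>{L..n}. f k)"
      by (rule sum.reindex_bij_witness[of _ "\<lambda>j. n - j" "\<lambda>k. n - k"])
        (use assms(2) in \<open>auto simp: n_def\<close>)
    finally show ?thesis .
  qed
  have lower: "b ^ L * (\<Sum>k<L. real (n choose k) * b ^ (L-1-k) * a ^ k) = (\<Sum>k<L. f k)"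
    unfolding sum_distrib_left f_def by (intro sum.cong) (auto simp: pow mult_ac)
  have "{..n} = {..<L} \<union> {L..n}" unfolding n_def using assms(2) by auto
  then have "(\<Sum>k<L. f k) + (\<Sum>k\<in>{L..n}. f k) = (\<Sum>k\<le>n. f k)"
    by (simp add: sum.union_disjoint ivl_disj_int)
  also have "\<dots> = 1"
    unfolding f_def using binomial_ring[of a b n] assms(1) by simp
  finally show ?thesis using upper lower unfolding n_def by linarith
qed

definition P_factor :: "nat \<Rightarrow> real \<Rightarrow> real" where
  "P_factor L t = (sin (pi * t / 2)) ^ (2 * L) *
     (\<Sum>k<L. real ((2 * L - 1) choose k) *
        (sin (pi * t / 2)) ^ (2 * (L - 1 - k)) * (cos (pi * t / 2)) ^ (2 * k))"

lemma Pfun_eq_prod_P_factor: "Pfun L x = (\<Prod>j\<in>UNIV. P_factor L (x $ j))"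
  unfolding Pfun_def P_factor_def by simp

lemma indicator_cube02_eq_prod:
  "indicator cube02 x = (\<Prod>j\<in>UNIV. indicator {0..2::real} (x $ j) :: real)"
proof (cases "x \<in> cube02")
  case False
  then obtain j where "x $ j \<notin> {0..2}" by (auto simp: cube02_def)
  then have "(\<Prod>j\<in>UNIV. indicator {0..2::real} (x $ j) :: real) = 0"
    by (subst prod_zero_iff) (auto intro!: exI[of _ j])
  then show ?thesis using False by simp
qed (simp add: cube02_def indicator_def)

lemma P_factor_add_one:
  assumes "L \<ge> 1"
  shows "P_factor L t + P_factor L (t + 1) = 1"
proof -
  have shift: "sin (pi * (t + 1) / 2) = cos (pi * t / 2)" "cos (pi * (t + 1) / 2) = - sin (pi * t / 2)"
    by (simp_all add: distrib_left add_divide_distrib sin_add cos_add)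
  have squares: "P_factor L t = ((sin (pi * t / 2))\<^sup>2) ^ L * (\<Sum>k<L. real ((2 * L - 1) choose k) *
      ((sin (pi * t / 2))\<^sup>2) ^ (L - 1 - k) * ((cos (pi * t / 2))\<^sup>2) ^ k)" for t
    unfolding P_factor_def by (simp add: power_mult)
  have "(sin (pi * t / 2))\<^sup>2 + (cos (pi * t / 2))\<^sup>2 = 1" by simp
  from binomial_sum_halves[OF this assms] show ?thesis
    unfolding squares shift by (simp add: mult.commute)
qed

lemma P_factor_0: "P_factor L 0 = 0"
  and P_factor_2: "P_factor L 2 = 0"
  by (cases L; simp add: P_factor_def)+

lemma Cn_flat_P_factor:
  assumes "L \<ge> 1"
  shows "Cn_flat 0 2 (2 * L - 1) (P_factor L)"
proof -
  have sin: "Cn_real n (\<lambda>t. sin (pi * t / 2))" and cos: "Cn_real n (\<lambda>t. cos (pi * t / 2))" for n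
    using Cn_real_sin_cos_affine[of n "pi / 2" 0] by (simp_all add: mult.commute)
  have "Cn_real n (\<lambda>t. \<Sum>k<L. real ((2 * L - 1) choose k) *
          (sin (pi * t / 2)) ^ (2 * (L - 1 - k)) * (cos (pi * t / 2)) ^ (2 * k))" for n
    by (intro Cn_real_sum Cn_real_mult Cn_real_const Cn_real_power sin cos) auto
  then show ?thesis
    unfolding P_factor_def[abs_def] by (intro Cn_flat_power_mult sin) (use assms in auto)
qed

lemma Ints_translates_into_interval:
  "{k::real. k \<in> \<int> \<and> y + k \<in> {a..b}} = of_int ` {\<lceil>a - y\<rceil>..\<lfloor>b - y\<rfloor>}"
  by (auto elim!: Ints_cases simp: ceiling_le_iff le_floor_iff)

lemma sum_Ints_translates_P_factor_indicator:
  assumes "L \<ge> 1"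
  shows "(\<Sum>k\<in>{k::real. k \<in> \<int> \<and> y + k \<in> {0..2}}.
           P_factor L (y + k) * indicator {0..2} (y + k)) = 1"
proof -
  have "(\<Sum>k\<in>{k::real. k \<in> \<int> \<and> y + k \<in> {0..2}}. P_factor L (y + k) * indicator {0..2} (y + k))
      = (\<Sum>k\<in>{k::real. k \<in> \<int> \<and> y + k \<in> {0..2}}. P_factor L (y + k))"
    by (rule sum.cong) auto
  also have "\<dots> = (\<Sum>j\<in>{\<lceil>-y\<rceil>..\<lfloor>2 - y\<rfloor>}. P_factor L (y + of_int j))"
    unfolding Ints_translates_into_interval by (subst sum.reindex) (auto simp: inj_on_def)
  also have "\<dots> = 1"
  proof (cases "y \<in> \<int>")
    case True
    then obtain m where m: "y = of_int m" by (auto elim: Ints_cases)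
    have "{\<lceil>-y\<rceil>..\<lfloor>2 - y\<rfloor>} = {-m, -m + 1, -m + 2}"
      unfolding m by (auto simp: ceiling_minus)
    then show ?thesis
      using P_factor_0 P_factor_2 P_factor_add_one[OF assms, of 0] m by simp
  next
    case False
    define m where "m = \<lfloor>y\<rfloor>"
    have "of_int m < y" "y < of_int m + 1" using False unfolding m_def
      by (metis Ints_of_int floor_less_iff less_eq_real_def of_int_floor_le) simp
    then have "\<lfloor>2 - y\<rfloor> = 1 - m" by (intro floor_unique) auto
    moreover have "\<lceil>-y\<rceil> = -m" unfolding m_def by (simp add: ceiling_minus)
    ultimately have "{\<lceil>-y\<rceil>..\<lfloor>2 - y\<rfloor>} = {-m, -m + 1}" by auto
    then show ?thesis
      using P_factor_add_one[OF assms, of "y - of_int m"] by (simp add: algebra_simps)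
  qed
  finally show ?thesis .
qed

theorem corollary3p4:
  fixes L :: nat
  assumes "CARD('n::finite) \<ge> 2" and "L \<ge> 1"
  shows "((\<forall>x :: real ^ 'n.
           ((\<lambda>n. Pfun L (x + n) * indicator cube02 (x + n)) has_sum 1) int_lattice) \<and>
         Cm (2 * L - 1) (\<lambda>x :: real ^ 'n. Pfun L x * indicator cube02 x))"
proof -
  define h where "h t = P_factor L t * indicator {0..2::real} t" for t
  have tensor: "Pfun L x * indicator cube02 x = (\<Prod>j\<in>UNIV. h (x $ j))" for x :: "real ^ 'n"
    by (simp add: h_def Pfun_eq_prod_P_factor indicator_cube02_eq_prod prod.distrib)
  have "Cn_real (2 * L - 1) h"
    unfolding h_def[abs_def]
    by (rule Cn_real_mult_indicator_interval[OF _ Cn_flat_P_factor[OF assms(2)]]) simp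
  then have smooth: "Cm (2 * L - 1) (\<lambda>x :: real ^ 'n. Pfun L x * indicator cube02 x)"
    unfolding tensor by (rule Cm_coordinate_product)
  have "((\<lambda>n. \<Prod>j\<in>UNIV. h (x $ j + n $ j)) has_sum 1) int_lattice" for x :: "real ^ 'n"
  proof -
    define A where "A j = {k::real. k \<in> \<int> \<and> x $ j + k \<in> {0..2}}" for j
    have "finite (A j)" for j
      unfolding A_def Ints_translates_into_interval by simp
    moreover have "(\<Sum>k\<in>A j. h (x $ j + k)) = 1" for j
      unfolding A_def h_def by (rule sum_Ints_translates_P_factor_indicator[OF assms(2)])
    ultimately show ?thesis
      using has_sum_coordinate_product_lattice[of A "\<lambda>j k. h (x $ j + k)" "\<lambda>_. 1"]
      by (auto simp: A_def h_def)
  qed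
  then show ?thesis
    using smooth by (simp add: tensor)
qed

end
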